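(* Let $N\ge1$, $M\ge1$, let $L$ be an invertible linear transformation of $\mathbb R^N$ and $u_1,\ldots,u_M\in\mathbb R^N$, and let $$\Lambda:=\bigcup_{j=1}^M L^*\left(u_j+\mathbb Z^N\right)\subset\mathbb R^N.$$ Suppose there exist $M$ points $a_1,\ldots,a_M\in\Lambda$ such that $\Lambda(a_i,a_k)\not\subset\Lambda$ for all $i\ne k$. Then $M$ is the smallest possible number in such a representation: whenever $\Lambda=\bigcup_{j=1}^{M_0}L_0^*\left(\tilde u_j+\mathbb Z^N\right)$ for some invertible linear transformation $L_0$ of $\mathbb R^N$, some integer $M_0\ge1$ and some vectors $\tilde u_1,\ldots,\tilde u_{M_0}\in\mathbb R^N$, we have $M\le M_0$.
   Context: $L^*$ denotes the adjoint of $L$. For two points $a,b\in\mathbb R^N$, $\Lambda(a,b):=\{a+k(b-a): k\in\mathbb Z\}$ is the one-dimensional lattice generated by $a$ and $b$. *)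

theory Defs
  imports "HOL-Analysis.Analysis"
begin

definition int_lattice :: "(real^'n) set" where
  "int_lattice = {z. \<forall>i. z $ i \<in> \<int>}"

text \<open>The set  U_{j=1..M} L^*(u_j + Z^N), with L a matrix and L^* its adjoint (transpose).\<close>
definition union_lattice :: "real^'n^'n \<Rightarrow> nat \<Rightarrow> (nat \<Rightarrow> real^'n) \<Rightarrow> (real^'n) set" where
  "union_lattice L M u = (\<Union>j\<in>{1..M}. (\<lambda>x. transpose L *v x) ` ((\<lambda>z. u j + z) ` int_lattice))"

definition lattice1 :: "real^'n \<Rightarrow> real^'n \<Rightarrow> (real^'n) set" where
  "lattice1 a b = {a + of_int k *\<^sub>R (b - a) | k. True}"

end

theory Submission
  imports Defs
begin

text \<open>Each translated lattice \<open>L\<^sup>*(w + \<int>\<^sup>N)\<close> is closed under forming the line lattice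
  \<open>\<Lambda>(x, y)\<close> of two of its points. So in any representation of \<open>\<Lambda>\<close> by \<open>M\<^sub>0\<close> such sets,
  the points \<open>a\<^sub>i\<close> must lie in pairwise different ones, whence \<open>M \<le> M\<^sub>0\<close> by pigeonhole.\<close>

definition lattice_coset :: "real^'n^'n \<Rightarrow> real^'n \<Rightarrow> (real^'n) set" where
  "lattice_coset L w = (\<lambda>x. transpose L *v x) ` ((\<lambda>z. w + z) ` int_lattice)"

lemma union_lattice_eq_Union_lattice_coset:
  "union_lattice L M u = (\<Union>j\<in>{1..M}. lattice_coset L (u j))"
  unfolding union_lattice_def lattice_coset_def ..

lemma int_lattice_affine_comb:
  assumes "z1 \<in> int_lattice" "z2 \<in> int_lattice"
  shows "z1 + of_int k *\<^sub>R (z2 - z1) \<in> int_lattice"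
  using assms unfolding int_lattice_def
  by (auto intro!: Ints_add Ints_mult Ints_diff Ints_of_int)

lemma lattice1_subset_lattice_coset:
  assumes x: "x \<in> lattice_coset L w" and y: "y \<in> lattice_coset L w"
  shows "lattice1 x y \<subseteq> lattice_coset L w"
proof
  fix p assume "p \<in> lattice1 x y"
  then obtain k :: int where p: "p = x + of_int k *\<^sub>R (y - x)"
    unfolding lattice1_def by auto
  obtain z1 z2 where z: "z1 \<in> int_lattice" "z2 \<in> int_lattice"
    and xy: "x = transpose L *v (w + z1)" "y = transpose L *v (w + z2)"
    using x y unfolding lattice_coset_def by auto
  have lin: "linear (\<lambda>x. transpose L *v x)"
    by (rule matrix_vector_mul_linear)
  have "p = transpose L *v (w + (z1 + of_int k *\<^sub>R (z2 - z1)))"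
    unfolding p xy
    by (simp add: linear_add[OF lin] linear_diff[OF lin] linear_scale[OF lin] algebra_simps)
  then show "p \<in> lattice_coset L w"
    using int_lattice_affine_comb[OF z] unfolding lattice_coset_def by blast
qed

theorem lemma2p4:
  fixes L :: "real^'n^'n" and M :: nat and u :: "nat \<Rightarrow> real^'n" and a :: "nat \<Rightarrow> real^'n"
  assumes "M \<ge> 1"
    and "invertible L"
    and "\<forall>i\<in>{1..M}. a i \<in> union_lattice L M u"
    and "\<forall>i\<in>{1..M}. \<forall>k\<in>{1..M}. i \<noteq> k \<longrightarrow> \<not> lattice1 (a i) (a k) \<subseteq> union_lattice L M u"
  shows "\<forall>(L0 :: real^'n^'n) (M0 :: nat) (v :: nat \<Rightarrow> real^'n).
           invertible L0 \<and> M0 \<ge> 1 \<and> union_lattice L M u = union_lattice L0 M0 v \<longrightarrow> M \<le> M0"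
proof (intro allI impI)
  fix L0 :: "real^'n^'n" and M0 :: nat and v :: "nat \<Rightarrow> real^'n"
  assume "invertible L0 \<and> M0 \<ge> 1 \<and> union_lattice L M u = union_lattice L0 M0 v"
  then have \<Lambda>: "union_lattice L M u = (\<Union>j\<in>{1..M0}. lattice_coset L0 (v j))"
    by (simp add: union_lattice_eq_Union_lattice_coset)
  have "\<forall>i\<in>{1..M}. \<exists>j\<in>{1..M0}. a i \<in> lattice_coset L0 (v j)"
    using assms(3) unfolding \<Lambda> by blast
  then obtain f where f: "\<And>i. i \<in> {1..M} \<Longrightarrow> f i \<in> {1..M0} \<and> a i \<in> lattice_coset L0 (v (f i))"
    by metis
  have "inj_on f {1..M}"
  proof (rule inj_onI, rule ccontr)
    fix i k assume i: "i \<in> {1..M}" and k: "k \<in> {1..M}" and "f i = f k" "i \<noteq> k"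
    then have "lattice1 (a i) (a k) \<subseteq> lattice_coset L0 (v (f i))"
      using f[OF i] f[OF k] by (simp add: lattice1_subset_lattice_coset)
    also have "\<dots> \<subseteq> union_lattice L M u"
      using f[OF i] unfolding \<Lambda> by blast
    finally show False using assms(4) i k \<open>i \<noteq> k\<close> by blast
  qed
  then have "card {1..M} \<le> card {1..M0}"
    by (rule card_inj_on_le) (use f in auto)
  then show "M \<le> M0" by simp
qed

end
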